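(* Let $G\colon Y\to X$ be a functor such that every object of $X$ has an absolute value. Let $x_0$ be a locally initial object of $X$ and let $y_0$ be an initial object of the full subcategory $Y_G(x_0)$. Then $x_0\cong |Gy_0|$ if and only if $x_0\cong|Gy|$ for some object $y$ of $Y$.
   Context: An object $x_0$ of a category $X$ is locally initial if for every object $x$ of $X$ there exists at most one morphism $x_0\to x$. For a locally initial object $x_0$ and a functor $G\colon Y\to X$, $Y_G(x_0)$ denotes the full subcategory of $Y$ of all objects $y$ such that there exists a morphism $x_0\to Gy$. For an object $x$ of $X$, an absolute value of $x$ is a locally initial object $|x|$ of $X$ admitting a morphism $|x|\to x$ such that for every locally initial object $x_1$ admitting a morphism $x_1\to x$ there exists a morphism $x_1\to|x|$; it is unique up to isomorphism. *)

theory Defs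
  imports Main
begin

text \<open>A (small-or-large) category given by a set of objects, hom-sets,
composition (comp g f = g after f) and identities.\<close>

record ('o, 'm) cat =
  Obj :: "'o set"
  Hom :: "'o \<Rightarrow> 'o \<Rightarrow> 'm set"
  comp :: "'m \<Rightarrow> 'm \<Rightarrow> 'm"
  cid :: "'o \<Rightarrow> 'm"

definition category :: "('o, 'm) cat \<Rightarrow> bool" where
  "category C \<longleftrightarrow>
     (\<forall>x\<in>Obj C. cid C x \<in> Hom C x x) \<and>
     (\<forall>x\<in>Obj C. \<forall>y\<in>Obj C. \<forall>z\<in>Obj C. \<forall>f\<in>Hom C x y. \<forall>g\<in>Hom C y z.
        comp C g f \<in> Hom C x z) \<and>
     (\<forall>w\<in>Obj C. \<forall>x\<in>Obj C. \<forall>y\<in>Obj C. \<forall>z\<in>Obj C.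
        \<forall>f\<in>Hom C w x. \<forall>g\<in>Hom C x y. \<forall>h\<in>Hom C y z.
        comp C h (comp C g f) = comp C (comp C h g) f) \<and>
     (\<forall>x\<in>Obj C. \<forall>y\<in>Obj C. \<forall>f\<in>Hom C x y.
        comp C f (cid C x) = f \<and> comp C (cid C y) f = f)"

record ('o, 'm, 'p, 'n) cfunctor =
  fobj :: "'o \<Rightarrow> 'p"
  fmor :: "'m \<Rightarrow> 'n"

definition is_functor ::
  "('o, 'm) cat \<Rightarrow> ('p, 'n) cat \<Rightarrow> ('o, 'm, 'p, 'n) cfunctor \<Rightarrow> bool" where
  "is_functor Y X G \<longleftrightarrow>
     (\<forall>y\<in>Obj Y. fobj G y \<in> Obj X) \<and>
     (\<forall>y\<in>Obj Y. \<forall>y'\<in>Obj Y. \<forall>f\<in>Hom Y y y'.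
        fmor G f \<in> Hom X (fobj G y) (fobj G y')) \<and>
     (\<forall>y\<in>Obj Y. fmor G (cid Y y) = cid X (fobj G y)) \<and>
     (\<forall>x\<in>Obj Y. \<forall>y\<in>Obj Y. \<forall>z\<in>Obj Y. \<forall>f\<in>Hom Y x y. \<forall>g\<in>Hom Y y z.
        fmor G (comp Y g f) = comp X (fmor G g) (fmor G f))"

definition iso_obj :: "('o, 'm) cat \<Rightarrow> 'o \<Rightarrow> 'o \<Rightarrow> bool" where
  "iso_obj C x y \<longleftrightarrow> x \<in> Obj C \<and> y \<in> Obj C \<and>
     (\<exists>f\<in>Hom C x y. \<exists>g\<in>Hom C y x. comp C g f = cid C x \<and> comp C f g = cid C y)"

definition locally_initial :: "('o, 'm) cat \<Rightarrow> 'o \<Rightarrow> bool" where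
  "locally_initial C x0 \<longleftrightarrow> x0 \<in> Obj C \<and>
     (\<forall>x\<in>Obj C. \<forall>f\<in>Hom C x0 x. \<forall>g\<in>Hom C x0 x. f = g)"

definition is_absval :: "('o, 'm) cat \<Rightarrow> 'o \<Rightarrow> 'o \<Rightarrow> bool" where
  "is_absval C x a \<longleftrightarrow> locally_initial C a \<and> Hom C a x \<noteq> {} \<and>
     (\<forall>x1. locally_initial C x1 \<and> Hom C x1 x \<noteq> {} \<longrightarrow> Hom C x1 a \<noteq> {})"

text \<open>|x|: a chosen absolute value (unique up to isomorphism when it exists).\<close>
definition absval :: "('o, 'm) cat \<Rightarrow> 'o \<Rightarrow> 'o" where
  "absval C x = (SOME a. is_absval C x a)"

definition YG_obj ::
  "('o, 'm) cat \<Rightarrow> ('p, 'n) cat \<Rightarrow> ('o, 'm, 'p, 'n) cfunctor \<Rightarrow> 'p \<Rightarrow> 'o set" where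
  "YG_obj Y X G x0 = {y \<in> Obj Y. Hom X x0 (fobj G y) \<noteq> {}}"

text \<open>Initial object of the full subcategory of Y on the object set S
  (hom-sets are those of Y, since the subcategory is full).\<close>
definition initial_in_full :: "('o, 'm) cat \<Rightarrow> 'o set \<Rightarrow> 'o \<Rightarrow> bool" where
  "initial_in_full Y S y0 \<longleftrightarrow> y0 \<in> S \<and> (\<forall>y\<in>S. \<exists>!f. f \<in> Hom Y y0 y)"

end

theory Submission
  imports Defs
begin

text \<open>If \<open>x\<^sub>0 \<cong> |G y|\<close>, then \<open>x\<^sub>0\<close> maps to \<open>G y\<close>, so \<open>y\<close> lies in \<open>Y\<^sub>G(x\<^sub>0)\<close> and receives a
  morphism from \<open>y\<^sub>0\<close>. Applying \<open>G\<close> and the monotonicity of absolute values gives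
  \<open>|G y\<^sub>0| \<rightarrow> |G y| \<cong> x\<^sub>0\<close>, while \<open>x\<^sub>0 \<rightarrow> G y\<^sub>0\<close> gives \<open>x\<^sub>0 \<rightarrow> |G y\<^sub>0|\<close>. Two locally
  initial objects with morphisms in both directions are isomorphic, since both composites
  are forced to be identities.\<close>

lemma category_comp_hom:
  assumes "category C" "x \<in> Obj C" "y \<in> Obj C" "z \<in> Obj C" "f \<in> Hom C x y" "g \<in> Hom C y z"
  shows "comp C g f \<in> Hom C x z"
  using assms unfolding category_def by blast

lemma category_cid_hom:
  assumes "category C" "x \<in> Obj C"
  shows "cid C x \<in> Hom C x x"
  using assms unfolding category_def by blast

lemma hom_nonempty_trans:
  assumes "category C" "x \<in> Obj C" "y \<in> Obj C" "z \<in> Obj C"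
    and "Hom C x y \<noteq> {}" "Hom C y z \<noteq> {}"
  shows "Hom C x z \<noteq> {}"
proof -
  obtain f g where "f \<in> Hom C x y" "g \<in> Hom C y z"
    using assms(5,6) by blast
  then show ?thesis
    using category_comp_hom[OF assms(1-4)] by blast
qed

lemma iso_obj_imp_hom_nonempty:
  assumes "iso_obj C x y"
  shows "Hom C x y \<noteq> {}" and "Hom C y x \<noteq> {}"
  using assms unfolding iso_obj_def by blast+

lemma functor_obj:
  assumes "is_functor Y X G" "y \<in> Obj Y"
  shows "fobj G y \<in> Obj X"
  using assms unfolding is_functor_def by blast

lemma functor_hom_nonempty:
  assumes "is_functor Y X G" "y \<in> Obj Y" "y' \<in> Obj Y" "Hom Y y y' \<noteq> {}"
  shows "Hom X (fobj G y) (fobj G y') \<noteq> {}"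
  using assms unfolding is_functor_def by blast

lemma locally_initial_iso_obj:
  assumes "category C" "locally_initial C a" "locally_initial C b"
    and "Hom C a b \<noteq> {}" "Hom C b a \<noteq> {}"
  shows "iso_obj C a b"
proof -
  obtain f g where f: "f \<in> Hom C a b" and g: "g \<in> Hom C b a"
    using assms(4,5) by blast
  have a: "a \<in> Obj C" and b: "b \<in> Obj C"
    using assms(2,3) unfolding locally_initial_def by blast+
  have "comp C g f = cid C a"
    using assms(2) a category_comp_hom[OF assms(1) a b a f g] category_cid_hom[OF assms(1) a]
    unfolding locally_initial_def by blast
  moreover have "comp C f g = cid C b"
    using assms(3) b category_comp_hom[OF assms(1) b a b g f] category_cid_hom[OF assms(1) b]
    unfolding locally_initial_def by blast
  ultimately show ?thesis
    unfolding iso_obj_def using a b f g by blast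
qed

lemma is_absval_absval:
  assumes "\<exists>a. is_absval C x a"
  shows "is_absval C x (absval C x)"
  using assms unfolding absval_def by (rule someI_ex)

lemma is_absval_obj:
  assumes "is_absval C x a"
  shows "a \<in> Obj C"
  using assms unfolding is_absval_def locally_initial_def by blast

lemma is_absval_hom_nonempty:
  assumes "is_absval C x a" "locally_initial C x\<^sub>1" "Hom C x\<^sub>1 x \<noteq> {}"
  shows "Hom C x\<^sub>1 a \<noteq> {}"
  using assms unfolding is_absval_def by blast

lemma is_absval_mono:
  assumes "category C" "x \<in> Obj C" "x' \<in> Obj C" "Hom C x x' \<noteq> {}"
    and "is_absval C x a" "is_absval C x' a'"
  shows "Hom C a a' \<noteq> {}"
proof -
  have "locally_initial C a" "Hom C a x \<noteq> {}"
    using assms(5) unfolding is_absval_def by blast+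
  moreover have "Hom C a x' \<noteq> {}"
    using hom_nonempty_trans[OF assms(1) is_absval_obj[OF assms(5)] assms(2,3)]
      calculation(2) assms(4) .
  ultimately show ?thesis
    using is_absval_hom_nonempty[OF assms(6)] by blast
qed

lemma iso_obj_absval_iff:
  assumes "category C" "locally_initial C x\<^sub>0" "x \<in> Obj C" "is_absval C x a"
  shows "iso_obj C x\<^sub>0 a \<longleftrightarrow> Hom C x\<^sub>0 x \<noteq> {} \<and> Hom C a x\<^sub>0 \<noteq> {}"
proof
  have x0: "x\<^sub>0 \<in> Obj C"
    using assms(2) unfolding locally_initial_def by blast
  have a: "locally_initial C a" "Hom C a x \<noteq> {}"
    using assms(4) unfolding is_absval_def by blast+
  show "Hom C x\<^sub>0 x \<noteq> {} \<and> Hom C a x\<^sub>0 \<noteq> {}" if iso: "iso_obj C x\<^sub>0 a"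
  proof
    show "Hom C x\<^sub>0 x \<noteq> {}"
      using iso_obj_imp_hom_nonempty(1)[OF iso] a(2)
      by (rule hom_nonempty_trans[OF assms(1) x0 is_absval_obj[OF assms(4)] assms(3)])
    show "Hom C a x\<^sub>0 \<noteq> {}"
      by (rule iso_obj_imp_hom_nonempty(2)[OF iso])
  qed
  show "iso_obj C x\<^sub>0 a" if "Hom C x\<^sub>0 x \<noteq> {} \<and> Hom C a x\<^sub>0 \<noteq> {}"
    using that locally_initial_iso_obj[OF assms(1,2) a(1)] is_absval_hom_nonempty[OF assms(4,2)]
    by blast
qed

theorem proposition2p13:
  fixes Y :: "('o, 'm) cat" and X :: "('p, 'n) cat"
    and G :: "('o, 'm, 'p, 'n) cfunctor"
  assumes "category Y" and "category X" and "is_functor Y X G"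
    and "\<forall>x\<in>Obj X. \<exists>a. is_absval X x a"
    and "locally_initial X x0"
    and "initial_in_full Y (YG_obj Y X G x0) y0"
  shows "iso_obj X x0 (absval X (fobj G y0)) \<longleftrightarrow>
         (\<exists>y\<in>Obj Y. iso_obj X x0 (absval X (fobj G y)))"
proof
  have x0: "x0 \<in> Obj X"
    using assms(5) unfolding locally_initial_def by blast
  have y0: "y0 \<in> Obj Y" "Hom X x0 (fobj G y0) \<noteq> {}"
    using assms(6) unfolding initial_in_full_def YG_obj_def by auto
  then show "iso_obj X x0 (absval X (fobj G y0)) \<Longrightarrow>
      \<exists>y\<in>Obj Y. iso_obj X x0 (absval X (fobj G y))"
    by blast
  have Gy0: "fobj G y0 \<in> Obj X"
    using functor_obj[OF assms(3) y0(1)] .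
  have absval: "is_absval X (fobj G y) (absval X (fobj G y))" if "y \<in> Obj Y" for y
    using assms(4) functor_obj[OF assms(3) that] by (intro is_absval_absval) blast
  assume "\<exists>y\<in>Obj Y. iso_obj X x0 (absval X (fobj G y))"
  then obtain y where y: "y \<in> Obj Y" and iso: "iso_obj X x0 (absval X (fobj G y))"
    by blast
  have Gy: "fobj G y \<in> Obj X"
    using functor_obj[OF assms(3) y] .
  have "Hom X x0 (fobj G y) \<noteq> {}" and to_x0: "Hom X (absval X (fobj G y)) x0 \<noteq> {}"
    using iso_obj_absval_iff[OF assms(2,5) Gy absval[OF y]] iso by simp_all
  then have "Hom Y y0 y \<noteq> {}"
    using assms(6) y unfolding initial_in_full_def YG_obj_def by blast
  then have "Hom X (fobj G y0) (fobj G y) \<noteq> {}"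
    by (rule functor_hom_nonempty[OF assms(3) y0(1) y])
  then have "Hom X (absval X (fobj G y0)) (absval X (fobj G y)) \<noteq> {}"
    by (rule is_absval_mono[OF assms(2) Gy0 Gy _ absval[OF y0(1)] absval[OF y]])
  then have "Hom X (absval X (fobj G y0)) x0 \<noteq> {}"
    using to_x0 by (rule hom_nonempty_trans[OF assms(2) is_absval_obj[OF absval[OF y0(1)]]
        is_absval_obj[OF absval[OF y]] x0])
  then show "iso_obj X x0 (absval X (fobj G y0))"
    using iso_obj_absval_iff[OF assms(2,5) Gy0 absval[OF y0(1)]] y0(2) by simp
qed

end
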